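(* Let $\mathcal{S}$ be an instance space, $\mathcal{W}$ a hypothesis space, and $\ell:\mathcal{S}\times\mathcal{W}\to\mathbb{R}^+$ a nonnegative loss. Consider a distributed learning problem with $K$ users: for each $k\in\{1,\ldots,K\}$, user $k$ holds a dataset $\mathbf{S}_k=(S_{k,1},\ldots,S_{k,n_k})$ with law $\pi_k^{\otimes n_k}$ for an (unknown) distribution $\pi_k$ on $\mathcal{S}$, the datasets $\mathbf{S}_1,\ldots,\mathbf{S}_K$ being independent; user $k$ outputs $W_k\in\mathcal{W}$ according to a conditional distribution $P_{W_k|\mathbf{S}_k}$, and a fusion algorithm outputs $\widehat W\in\mathcal{W}$ according to $P_{\widehat W|W_1,\ldots,W_K}$. Denote this distributed learning algorithm by $\mathcal{A}_K$, let $n=\sum_{k=1}^K n_k$, $\mu=\prod_{k=1}^K\pi_k$, and let $P_{\widehat W}$ be the marginal law of $\widehat W$. For each $k$, let $(\bar S_k,\bar W)\sim\pi_k\otimes P_{\widehat W}$ (independent), let $\Lambda_k(\lambda)$ be the cumulant generating function of $\ell(\bar S_k,\bar W)$, i.e. $\Lambda_k(\lambda)=\log\mathbb{E}\big[e^{\lambda(\ell(\bar S_k,\bar W)-\mathbb{E}[\ell(\bar S_k,\bar W)])}\big]$, and suppose there are $b_{k\pm}\in(0,\infty]$ and convex functions $\psi_{k\pm}:[0,b_{k\pm})\to\mathbb{R}$ with $\psi_{k\pm}(0)=\psi_{k\pm}'(0)=0$ such that $\Lambda_k(\lambda)\le\psi_{k+}(\lambda)$ for $\lambda\in[0,b_{k+})$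 and $\Lambda_k(\lambda)\le\psi_{k-}(-\lambda)$ for $\lambda\in(-b_{k-},0]$. Then \[ -\frac1n\sum_{k=1}^K\sum_{i=1}^{n_k}\psi_{k+}^{\ast-1}\big(I(S_{k,i};\widehat W)\big)\;\le\;{\rm gen}(\mu;\mathcal{A}_K)\;\le\;\frac1n\sum_{k=1}^K\sum_{i=1}^{n_k}\psi_{k-}^{\ast-1}\big(I(S_{k,i};\widehat W)\big). \]
   Context: For $w\in\mathcal{W}$, $L_{\pi_k}(w)=\mathbb{E}_{S\sim\pi_k}[\ell(S,w)]$ and $L_{\mathbf{S}_k}(w)=\frac1{n_k}\sum_{i=1}^{n_k}\ell(S_{k,i},w)$. The distributed expected risk is $L_\mu(w)=\sum_{k=1}^K\frac{n_k}{n}L_{\pi_k}(w)$, the distributed empirical risk is $L_{\mathbf{S}_K}(w)=\sum_{k=1}^K\frac{n_k}{n}L_{\mathbf{S}_k}(w)$, and the expected generalization error is ${\rm gen}(\mu;\mathcal{A}_K)=\mathbb{E}[L_\mu(\widehat W)-L_{\mathbf{S}_K}(\widehat W)]$. $I(\cdot;\cdot)$ is mutual information. For a convex $\psi:[0,b)\to\mathbb{R}$, $\psi^\ast(x)=\sup_{\lambda\in[0,b)}(\lambda x-\psi(\lambda))$ is its Legendre dual and $\psi^{\ast-1}$ the inverse of $\psi^\ast$ (on $[0,\infty)$). *)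

theory Defs
  imports "HOL-Probability.Probability"
begin

definition sample_index :: "nat \<Rightarrow> (nat \<Rightarrow> nat) \<Rightarrow> (nat \<times> nat) set" where
  "sample_index K n = {(k, i). k < K \<and> i < n k}"

definition data_law :: "nat \<Rightarrow> (nat \<Rightarrow> nat) \<Rightarrow> (nat \<Rightarrow> 's measure) \<Rightarrow> (nat \<times> nat \<Rightarrow> 's) measure" where
  "data_law K n \<pi> = PiM (sample_index K n) (\<lambda>ki. \<pi> (fst ki))"

definition user_data :: "(nat \<Rightarrow> nat) \<Rightarrow> (nat \<times> nat \<Rightarrow> 's) \<Rightarrow> nat \<Rightarrow> (nat \<Rightarrow> 's)" where
  "user_data n d k = (\<lambda>i\<in>{..<n k}. d (k, i))"

text \<open>Conditional law of (W_1,...,W_K) given all data: users act independently,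
  user k through the kernel P_{W_k|S_k} = kappa k.\<close>
definition users_law :: "nat \<Rightarrow> (nat \<Rightarrow> nat) \<Rightarrow> (nat \<Rightarrow> (nat \<Rightarrow> 's) \<Rightarrow> 'w measure)
    \<Rightarrow> (nat \<times> nat \<Rightarrow> 's) \<Rightarrow> (nat \<Rightarrow> 'w) measure" where
  "users_law K n \<kappa> d = PiM {..<K} (\<lambda>k. \<kappa> k (user_data n d k))"

text \<open>Joint law of (all data, W-hat); fusion kernel phi = P_{W-hat|W_1..W_K}.\<close>
definition joint_law :: "'s measure \<Rightarrow> 'w measure \<Rightarrow> nat \<Rightarrow> (nat \<Rightarrow> nat) \<Rightarrow> (nat \<Rightarrow> 's measure)
    \<Rightarrow> (nat \<Rightarrow> (nat \<Rightarrow> 's) \<Rightarrow> 'w measure) \<Rightarrow> ((nat \<Rightarrow> 'w) \<Rightarrow> 'w measure)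
    \<Rightarrow> ((nat \<times> nat \<Rightarrow> 's) \<times> 'w) measure" where
  "joint_law Ms Mw K n \<pi> \<kappa> \<phi> =
     bind (data_law K n \<pi>)
       (\<lambda>d. distr (bind (users_law K n \<kappa> d) \<phi>)
               (PiM (sample_index K n) (\<lambda>_. Ms) \<Otimes>\<^sub>M Mw) (\<lambda>w. (d, w)))"

definition pop_risk :: "('s \<Rightarrow> 'w \<Rightarrow> real) \<Rightarrow> 's measure \<Rightarrow> 'w \<Rightarrow> real" where
  "pop_risk loss pik w = (\<integral>s. loss s w \<partial>pik)"

definition emp_risk :: "('s \<Rightarrow> 'w \<Rightarrow> real) \<Rightarrow> (nat \<Rightarrow> nat) \<Rightarrow> (nat \<times> nat \<Rightarrow> 's) \<Rightarrow> nat \<Rightarrow> 'w \<Rightarrow> real" where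
  "emp_risk loss n d k w = (1 / real (n k)) * (\<Sum>i<n k. loss (d (k, i)) w)"

definition dist_pop_risk :: "('s \<Rightarrow> 'w \<Rightarrow> real) \<Rightarrow> nat \<Rightarrow> (nat \<Rightarrow> nat) \<Rightarrow> (nat \<Rightarrow> 's measure) \<Rightarrow> 'w \<Rightarrow> real" where
  "dist_pop_risk loss K n \<pi> w = (\<Sum>k<K. (real (n k) / real (\<Sum>j<K. n j)) * pop_risk loss (\<pi> k) w)"

definition dist_emp_risk :: "('s \<Rightarrow> 'w \<Rightarrow> real) \<Rightarrow> nat \<Rightarrow> (nat \<Rightarrow> nat) \<Rightarrow> (nat \<times> nat \<Rightarrow> 's) \<Rightarrow> 'w \<Rightarrow> real" where
  "dist_emp_risk loss K n d w = (\<Sum>k<K. (real (n k) / real (\<Sum>j<K. n j)) * emp_risk loss n d k w)"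

definition gen_error :: "'s measure \<Rightarrow> 'w measure \<Rightarrow> ('s \<Rightarrow> 'w \<Rightarrow> real) \<Rightarrow> nat \<Rightarrow> (nat \<Rightarrow> nat)
    \<Rightarrow> (nat \<Rightarrow> 's measure) \<Rightarrow> (nat \<Rightarrow> (nat \<Rightarrow> 's) \<Rightarrow> 'w measure) \<Rightarrow> ((nat \<Rightarrow> 'w) \<Rightarrow> 'w measure) \<Rightarrow> real" where
  "gen_error Ms Mw loss K n \<pi> \<kappa> \<phi> =
     (\<integral>dw. dist_pop_risk loss K n \<pi> (snd dw) - dist_emp_risk loss K n (fst dw) (snd dw)
        \<partial>(joint_law Ms Mw K n \<pi> \<kappa> \<phi>))"

text \<open>Mutual information (in nats) of X and Y under M, as an extended real:
  the library value when the KL divergence is finite (well-defined), and +infinity otherwise.\<close>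
definition mutual_info :: "'a measure \<Rightarrow> 'b measure \<Rightarrow> 'c measure \<Rightarrow> ('a \<Rightarrow> 'b) \<Rightarrow> ('a \<Rightarrow> 'c) \<Rightarrow> ereal" where
  "mutual_info M S T X Y =
     (let P = distr M S X \<Otimes>\<^sub>M distr M T Y; Q = distr M (S \<Otimes>\<^sub>M T) (\<lambda>x. (X x, Y x)) in
      if absolutely_continuous P Q \<and> integrable Q (entropy_density (exp 1) P Q)
      then ereal (prob_space.mutual_information M (exp 1) S T X Y) else \<infinity>)"

definition cgf :: "'a measure \<Rightarrow> ('a \<Rightarrow> real) \<Rightarrow> real \<Rightarrow> real" where
  "cgf P f t = ln (\<integral>x. exp (t * (f x - (\<integral>y. f y \<partial>P))) \<partial>P)"

definition dom_b :: "ereal \<Rightarrow> real set" where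
  "dom_b b = {x. 0 \<le> x \<and> ereal x < b}"

definition legendre_dual :: "(real \<Rightarrow> real) \<Rightarrow> ereal \<Rightarrow> real \<Rightarrow> ereal" where
  "legendre_dual \<psi> b x = (SUP t\<in>dom_b b. ereal (t * x - \<psi> t))"

text \<open>Inverse of psi^* on [0,infinity) (psi^* is strictly increasing there where finite);
  rendered as the generalized inverse, which also gives psi^*-1(infinity) = infinity.\<close>
definition legendre_dual_inv :: "(real \<Rightarrow> real) \<Rightarrow> ereal \<Rightarrow> ereal \<Rightarrow> ereal" where
  "legendre_dual_inv \<psi> b y = (SUP x\<in>{x. 0 \<le> x \<and> legendre_dual \<psi> b x \<le> y}. ereal x)"

definition admissible_psi :: "(real \<Rightarrow> real) \<Rightarrow> ereal \<Rightarrow> bool" where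
  "admissible_psi \<psi> b \<longleftrightarrow> 0 < b \<and> convex_on (dom_b b) \<psi> \<and> \<psi> 0 = 0 \<and>
     (\<psi> has_real_derivative 0) (at 0 within dom_b b)"

end

(*
  Fix a sample S = S_(k,i). Let Q be the joint law of (S, W) for the fused output W, and
  P = pi_k x P_W the product of its marginals (the marginal of S is pi_k), so that
  I(S; W) = KL(Q || P). The Donsker-Varadhan variational formula gives, for t in [0, b),
    t (E_Q l - E_P l) <= KL(Q || P) + log E_P exp (t (l - E_P l)) <= I(S; W) + psi(t),
  i.e. psi^*(E_Q l - E_P l) <= I(S; W), whence E_Q l - E_P l <= psi^*-1(I(S; W));
  the same argument for -l bounds E_P l - E_Q l. The generalization error is the average
  over all n samples of E_P l - E_Q l, since E_P l is the population risk of user k and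
  E_Q l is the expected loss of the sample in the empirical risk.
*)
theory Submission
  imports Defs
begin

section \<open>Legendre duals and cumulant generating functions\<close>

lemma legendre_dual_inv_infinity: "ereal x \<le> legendre_dual_inv \<psi> b \<infinity>"
proof -
  have "ereal (max x 0) \<le> legendre_dual_inv \<psi> b \<infinity>"
    unfolding legendre_dual_inv_def by (intro SUP_upper) auto
  then show ?thesis by (rule order_trans[rotated]) auto
qed

text \<open>The supremum defining \<^const>\<open>legendre_dual_inv\<close> ranges over nonnegative arguments only,
  hence the detour through \<open>max x 0\<close>.\<close>
lemma le_legendre_dual_inv:
  assumes psi_nonneg: "\<And>t. t \<in> dom_b b \<Longrightarrow> 0 \<le> \<psi> t"
    and bound: "\<And>t. t \<in> dom_b b \<Longrightarrow> t * x - \<psi> t \<le> y" and y: "0 \<le> y"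
  shows "ereal x \<le> legendre_dual_inv \<psi> b (ereal y)"
proof -
  have "legendre_dual \<psi> b (max x 0) \<le> ereal y"
    unfolding legendre_dual_def
  proof (rule SUP_least)
    fix t assume t: "t \<in> dom_b b"
    show "ereal (t * max x 0 - \<psi> t) \<le> ereal y"
      using psi_nonneg[OF t] bound[OF t] y by (cases "0 \<le> x") (auto simp: max_def)
  qed
  then have "ereal (max x 0) \<le> legendre_dual_inv \<psi> b (ereal y)"
    unfolding legendre_dual_inv_def by (intro SUP_upper) auto
  then show ?thesis by (rule order_trans[rotated]) auto
qed

lemma legendre_dual_inv_nonneg:
  assumes "\<And>t. t \<in> dom_b b \<Longrightarrow> 0 \<le> \<psi> t" and "0 \<le> y"
  shows "0 \<le> legendre_dual_inv \<psi> b y"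
proof (cases y)
  case (real r)
  have "ereal 0 \<le> legendre_dual_inv \<psi> b (ereal r)"
    by (rule le_legendre_dual_inv) (use assms real in force)+
  then show ?thesis using real by (simp add: zero_ereal_def)
next
  case PInf
  then show ?thesis using legendre_dual_inv_infinity[of 0] by (simp add: zero_ereal_def)
qed (use assms in simp)

lemma cgf_nonneg:
  assumes "prob_space P" and f: "integrable P f"
    and exp_f: "integrable P (\<lambda>x. exp (t * (f x - (\<integral>y. f y \<partial>P))))"
  shows "0 \<le> cgf P f t"
proof -
  interpret prob_space P by fact
  let ?c = "\<integral>y. f y \<partial>P"
  have "(\<integral>x. 1 + t * (f x - ?c) \<partial>P) \<le> (\<integral>x. exp (t * (f x - ?c)) \<partial>P)"
    by (rule integral_mono) (use f exp_f in \<open>auto simp: exp_ge_add_one_self\<close>)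
  moreover have "(\<integral>x. 1 + t * (f x - ?c) \<partial>P) = 1"
    using f by (simp add: prob_space algebra_simps)
  ultimately show ?thesis unfolding cgf_def by simp
qed

lemma cgf_le_imp_nonneg:
  assumes "prob_space P" "integrable P f"
    and cgf_le: "integrable P (\<lambda>x. exp (t * (f x - (\<integral>y. f y \<partial>P)))) \<and> cgf P f t \<le> \<psi> t"
  shows "0 \<le> \<psi> t"
  using cgf_nonneg[OF assms(1,2)] cgf_le by fastforce

lemma cgf_uminus: "cgf P (\<lambda>x. - f x) t = cgf P f (- t)"
  unfolding cgf_def integral_minus by (simp add: right_diff_distrib)

section \<open>Change of measure\<close>

lemma AE_RN_deriv_pos:
  assumes "sigma_finite_measure P" "sigma_finite_measure Q"
    and sets_eq: "sets Q = sets P" and ac: "absolutely_continuous P Q"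
  shows "AE x in Q. 0 < enn2real (RN_deriv P Q x)"
proof -
  interpret P: sigma_finite_measure P by fact
  have "AE x in P. RN_deriv P Q x \<noteq> \<infinity>"
    by (rule P.RN_deriv_finite[OF assms(2) ac sets_eq])
  then have "AE x in density P (RN_deriv P Q). 0 < RN_deriv P Q x \<and> RN_deriv P Q x \<noteq> \<infinity>"
    by (subst AE_density) auto
  then show ?thesis
    unfolding P.density_RN_deriv[OF ac sets_eq]
    by eventually_elim (auto simp: enn2real_positive_iff less_top)
qed

lemma nn_integral_divide_RN_deriv_le:
  fixes g :: "'a \<Rightarrow> real"
  assumes "sigma_finite_measure P" "sigma_finite_measure Q"
    and sets_eq: "sets Q = sets P" and ac: "absolutely_continuous P Q"
    and [measurable]: "g \<in> borel_measurable P" and g_nonneg: "\<And>x. 0 \<le> g x"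
  shows "(\<integral>\<^sup>+x. ennreal (g x / enn2real (RN_deriv P Q x)) \<partial>Q) \<le> (\<integral>\<^sup>+x. ennreal (g x) \<partial>P)"
proof -
  interpret P: sigma_finite_measure P by fact
  define r where "r = RN_deriv P Q"
  have [measurable]: "r \<in> borel_measurable P"
    unfolding r_def by simp
  have "(\<integral>\<^sup>+x. ennreal (g x / enn2real (r x)) \<partial>Q) = (\<integral>\<^sup>+x. r x * ennreal (g x / enn2real (r x)) \<partial>P)"
    unfolding r_def
    by (subst (1) P.density_RN_deriv[OF ac sets_eq, symmetric], subst nn_integral_density) auto
  also have "\<dots> \<le> (\<integral>\<^sup>+x. ennreal (g x) \<partial>P)"
  proof (rule nn_integral_mono_AE)
    show "AE x in P. r x * ennreal (g x / enn2real (r x)) \<le> ennreal (g x)"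
      using P.RN_deriv_finite[OF assms(2) ac sets_eq] unfolding r_def[symmetric]
    proof eventually_elim
      case (elim x)
      show ?case
      proof (cases "r x = 0")
        case False
        with elim obtain y where "0 < y" "r x = ennreal y"
          by (cases "r x" rule: ennreal_cases) auto
        then show ?thesis
          using g_nonneg[of x] by (simp add: ennreal_mult''[symmetric])
      qed simp
    qed
  qed
  finally show ?thesis
    unfolding r_def .
qed

lemma integral_divide_RN_deriv_le:
  fixes g :: "'a \<Rightarrow> real"
  assumes "sigma_finite_measure P" "sigma_finite_measure Q"
    and sets_eq: "sets Q = sets P" and ac: "absolutely_continuous P Q"
    and g: "integrable P g" "\<And>x. 0 \<le> g x"
  defines "\<rho> \<equiv> \<lambda>x. enn2real (RN_deriv P Q x)"
  shows "integrable Q (\<lambda>x. g x / \<rho> x)" and "(\<integral>x. g x / \<rho> x \<partial>Q) \<le> (\<integral>x. g x \<partial>P)"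
proof -
  have "(\<integral>\<^sup>+x. ennreal (g x / \<rho> x) \<partial>Q) \<le> (\<integral>\<^sup>+x. ennreal (g x) \<partial>P)"
    unfolding \<rho>_def using g by (intro nn_integral_divide_RN_deriv_le[OF assms(1-4)]) auto
  also have "\<dots> = ennreal (\<integral>x. g x \<partial>P)"
    using g by (intro nn_integral_eq_integral) auto
  finally have nn_le: "(\<integral>\<^sup>+x. ennreal (g x / \<rho> x) \<partial>Q) \<le> ennreal (\<integral>x. g x \<partial>P)" .
  have quotient_nonneg: "0 \<le> g x / \<rho> x" for x
    using g(2)[of x] by (simp add: \<rho>_def)
  have "(\<lambda>x. g x / \<rho> x) \<in> borel_measurable P"
    unfolding \<rho>_def using g(1) by measurable
  then have quotient_measurable: "(\<lambda>x. g x / \<rho> x) \<in> borel_measurable Q"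
    by (simp add: measurable_cong_sets[OF sets_eq refl])
  show integrable: "integrable Q (\<lambda>x. g x / \<rho> x)"
    using nn_le quotient_nonneg quotient_measurable
    by (intro integrableI_nonneg) (auto simp: less_top[symmetric] top_unique intro: le_less_trans)
  have "ennreal (\<integral>x. g x / \<rho> x \<partial>Q) = (\<integral>\<^sup>+x. ennreal (g x / \<rho> x) \<partial>Q)"
    using integrable quotient_nonneg by (intro nn_integral_eq_integral[symmetric]) auto
  moreover have "0 \<le> (\<integral>x. g x \<partial>P)"
    using g(2) by (simp add: integral_nonneg)
  ultimately show "(\<integral>x. g x / \<rho> x \<partial>Q) \<le> (\<integral>x. g x \<partial>P)"
    using nn_le by (metis ennreal_le_iff)
qed

text \<open>With \<open>\<rho> = dQ/dP\<close> and \<open>Z = \<integral> e\<^sup>f dP\<close>, the function \<open>h = e\<^sup>f / (Z \<rho>)\<close> has \<open>Q\<close>-mean at most 1,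
  and integrating \<open>ln h \<le> h - 1\<close> against \<open>Q\<close> gives the inequality.\<close>
lemma donsker_varadhan_inequality:
  fixes f :: "'a \<Rightarrow> real"
  assumes "prob_space P" "prob_space Q" and sets_eq: "sets Q = sets P"
    and ac: "absolutely_continuous P Q"
    and KL_finite: "integrable Q (entropy_density (exp 1) P Q)"
    and f: "integrable Q f" and exp_f: "integrable P (\<lambda>x. exp (f x))"
  shows "(\<integral>x. f x \<partial>Q) \<le> KL_divergence (exp 1) P Q + ln (\<integral>x. exp (f x) \<partial>P)"
proof -
  interpret P: prob_space P by fact
  interpret Q: prob_space Q by fact
  note sigma_finite = P.sigma_finite_measure_axioms Q.sigma_finite_measure_axioms
  define \<rho> where "\<rho> x = enn2real (RN_deriv P Q x)" for x
  define Z where "Z = (\<integral>x. exp (f x) \<partial>P)"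
  have "Z \<noteq> 0"
  proof
    assume "Z = 0"
    then have "AE x in P. exp (f x) = 0"
      unfolding Z_def using exp_f by (subst (asm) integral_nonneg_eq_0_iff_AE) auto
    then show False by simp
  qed
  then have Z_pos: "0 < Z"
    unfolding Z_def by (simp add: order_neq_le_trans integral_nonneg)
  define g where "g x = exp (f x) / Z" for x
  have g: "integrable P g" "\<And>x. 0 \<le> g x"
    using exp_f Z_pos unfolding g_def[abs_def] by auto
  have "(\<integral>x. g x \<partial>P) = 1"
    using Z_pos by (simp add: g_def Z_def)
  then have h: "integrable Q (\<lambda>x. g x / \<rho> x)" "(\<integral>x. g x / \<rho> x \<partial>Q) \<le> 1"
    using integral_divide_RN_deriv_le[OF sigma_finite sets_eq ac g] by (simp_all add: \<rho>_def)
  have ln_\<rho>: "integrable Q (\<lambda>x. ln (\<rho> x))" "KL_divergence (exp 1) P Q = (\<integral>x. ln (\<rho> x) \<partial>Q)"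
    using KL_finite by (simp_all add: KL_divergence_def entropy_density_def log_def \<rho>_def comp_def)
  have "(\<integral>x. f x - ln Z - ln (\<rho> x) \<partial>Q) \<le> (\<integral>x. g x / \<rho> x - 1 \<partial>Q)"
  proof (rule integral_mono_AE)
    show "AE x in Q. f x - ln Z - ln (\<rho> x) \<le> g x / \<rho> x - 1"
      using AE_RN_deriv_pos[OF sigma_finite sets_eq ac] unfolding \<rho>_def[symmetric]
    proof eventually_elim
      case (elim x)
      then have "g x / \<rho> x = exp (f x - ln Z - ln (\<rho> x))"
        using Z_pos by (simp add: g_def exp_diff)
      then show ?case using exp_ge_add_one_self[of "f x - ln Z - ln (\<rho> x)"] by linarith
    qed
  qed (use f ln_\<rho> h in auto)
  then show ?thesis
    using f ln_\<rho> h by (simp add: Q.prob_space Z_def)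
qed

lemma KL_divergence_nonneg:
  assumes "prob_space P" "prob_space Q" "sets Q = sets P" "absolutely_continuous P Q"
    and "integrable Q (entropy_density (exp 1) P Q)"
  shows "0 \<le> KL_divergence (exp 1) P Q"
proof -
  interpret P: prob_space P by fact
  show ?thesis
    using donsker_varadhan_inequality[OF assms, of "\<lambda>_. 0"] by (simp add: P.prob_space)
qed

lemma KL_change_of_measure_le_legendre_dual_inv:
  fixes f :: "'a \<Rightarrow> real"
  assumes "prob_space P" "prob_space Q" and sets_eq: "sets Q = sets P"
    and ac: "absolutely_continuous P Q"
    and KL_finite: "integrable Q (entropy_density (exp 1) P Q)"
    and f_P: "integrable P f" and f_Q: "integrable Q f"
    and cgf_le: "\<And>t. t \<in> dom_b b \<Longrightarrow>
      integrable P (\<lambda>x. exp (t * (f x - (\<integral>y. f y \<partial>P)))) \<and> cgf P f t \<le> \<psi> t"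
  shows "ereal ((\<integral>x. f x \<partial>Q) - (\<integral>x. f x \<partial>P))
    \<le> legendre_dual_inv \<psi> b (ereal (KL_divergence (exp 1) P Q))"
proof (rule le_legendre_dual_inv)
  show "0 \<le> \<psi> t" if "t \<in> dom_b b" for t
    using cgf_le_imp_nonneg[OF assms(1) f_P] cgf_le[OF that] by blast
  show "0 \<le> KL_divergence (exp 1) P Q"
    by (rule KL_divergence_nonneg[OF assms(1-5)])
next
  fix t assume t: "t \<in> dom_b b"
  interpret Q: prob_space Q by fact
  let ?c = "\<integral>y. f y \<partial>P"
  have "(\<integral>x. t * (f x - ?c) \<partial>Q) \<le> KL_divergence (exp 1) P Q + ln (\<integral>x. exp (t * (f x - ?c)) \<partial>P)"
    using cgf_le[OF t] f_Q by (intro donsker_varadhan_inequality[OF assms(1-5)]) auto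
  moreover have "(\<integral>x. t * (f x - ?c) \<partial>Q) = t * ((\<integral>x. f x \<partial>Q) - ?c)"
    using f_Q by (simp add: Q.prob_space algebra_simps)
  ultimately show "t * ((\<integral>x. f x \<partial>Q) - ?c) - \<psi> t \<le> KL_divergence (exp 1) P Q"
    using cgf_le[OF t] unfolding cgf_def by linarith
qed

section \<open>Information bounds for a pair of random variables\<close>

lemma mutual_info_cases:
  fixes J :: "'a measure" and S :: "'b measure" and T :: "'c measure"
    and X :: "'a \<Rightarrow> 'b" and Y :: "'a \<Rightarrow> 'c"
  assumes "prob_space J"
  defines "P \<equiv> distr J S X \<Otimes>\<^sub>M distr J T Y" and "Q \<equiv> distr J (S \<Otimes>\<^sub>M T) (\<lambda>x. (X x, Y x))"
  obtains (finite) "absolutely_continuous P Q" "integrable Q (entropy_density (exp 1) P Q)"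
      "mutual_info J S T X Y = ereal (KL_divergence (exp 1) P Q)"
  | (infinite) "mutual_info J S T X Y = \<infinity>"
  using assms unfolding mutual_info_def prob_space.mutual_information_def[OF assms(1)] Let_def
  by (cases "absolutely_continuous P Q \<and> integrable Q (entropy_density (exp 1) P Q)") auto

lemma prob_space_joint_and_product_distr:
  assumes "prob_space J" and [measurable]: "X \<in> J \<rightarrow>\<^sub>M S" "Y \<in> J \<rightarrow>\<^sub>M T"
  shows "prob_space (distr J S X \<Otimes>\<^sub>M distr J T Y)"
    and "prob_space (distr J (S \<Otimes>\<^sub>M T) (\<lambda>x. (X x, Y x)))"
    and "sets (distr J (S \<Otimes>\<^sub>M T) (\<lambda>x. (X x, Y x))) = sets (distr J S X \<Otimes>\<^sub>M distr J T Y)"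
proof -
  interpret J: prob_space J by fact
  show "prob_space (distr J S X \<Otimes>\<^sub>M distr J T Y)"
    by (intro prob_space_pair J.prob_space_distr) measurable
  show "prob_space (distr J (S \<Otimes>\<^sub>M T) (\<lambda>x. (X x, Y x)))"
    by (intro J.prob_space_distr) measurable
  show "sets (distr J (S \<Otimes>\<^sub>M T) (\<lambda>x. (X x, Y x))) = sets (distr J S X \<Otimes>\<^sub>M distr J T Y)"
    unfolding sets_distr by (rule sets_pair_measure_cong) simp_all
qed

lemma mutual_info_nonneg:
  assumes "prob_space J" "X \<in> J \<rightarrow>\<^sub>M S" "Y \<in> J \<rightarrow>\<^sub>M T"
  shows "0 \<le> mutual_info J S T X Y"
proof (cases rule: mutual_info_cases[OF assms(1), of S X T Y, case_names finite infinite])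
  case finite
  with KL_divergence_nonneg[OF prob_space_joint_and_product_distr[OF assms]] show ?thesis
    by (simp only: ereal_less_eq(5))
qed simp

lemma mutual_info_decoupling:
  fixes f :: "'b \<times> 'c \<Rightarrow> real"
  assumes J: "prob_space J" and [measurable]: "X \<in> J \<rightarrow>\<^sub>M S" "Y \<in> J \<rightarrow>\<^sub>M T"
  defines "P \<equiv> distr J S X \<Otimes>\<^sub>M distr J T Y"
  assumes f_J: "integrable J (\<lambda>x. f (X x, Y x))" and f_P: "integrable P f"
    and cgf_le: "\<And>t. t \<in> dom_b b \<Longrightarrow>
      integrable P (\<lambda>z. exp (t * (f z - (\<integral>z. f z \<partial>P)))) \<and> cgf P f t \<le> \<psi> t"
  shows "ereal ((\<integral>x. f (X x, Y x) \<partial>J) - (\<integral>z. f z \<partial>P)) \<le> legendre_dual_inv \<psi> b (mutual_info J S T X Y)"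
proof (cases rule: mutual_info_cases[OF J, of S X T Y, case_names finite infinite])
  case finite
  define Q where "Q = distr J (S \<Otimes>\<^sub>M T) (\<lambda>x. (X x, Y x))"
  have "f \<in> borel_measurable P"
    using f_P by blast
  then have [measurable]: "f \<in> borel_measurable (S \<Otimes>\<^sub>M T)"
    unfolding P_def
    by (simp add: measurable_cong_sets[OF sets_pair_measure_cong[OF sets_distr sets_distr] refl])
  have "integrable Q f" "(\<integral>z. f z \<partial>Q) = (\<integral>x. f (X x, Y x) \<partial>J)"
    using f_J unfolding Q_def by (simp_all add: integrable_distr_eq integral_distr)
  with KL_change_of_measure_le_legendre_dual_inv[OF prob_space_joint_and_product_distr[OF assms(1-3)]
      finite(1,2), of f b \<psi>]
  show ?thesis
    using f_P cgf_le unfolding finite(3) P_def Q_def by simp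
next
  case infinite
  then show ?thesis by (simp add: legendre_dual_inv_infinity)
qed

lemma mutual_info_loss_gap_bounds:
  fixes loss :: "'b \<Rightarrow> 'c \<Rightarrow> real"
  assumes "prob_space J" "X \<in> J \<rightarrow>\<^sub>M S" "Y \<in> J \<rightarrow>\<^sub>M T"
  defines "P \<equiv> distr J S X \<Otimes>\<^sub>M distr J T Y"
  assumes loss_J: "integrable J (\<lambda>x. loss (X x) (Y x))"
    and loss_P: "integrable P (\<lambda>z. loss (fst z) (snd z))"
    and cgf_p: "\<And>t. t \<in> dom_b bp \<Longrightarrow>
      integrable P (\<lambda>z. exp (t * (loss (fst z) (snd z) - (\<integral>z. loss (fst z) (snd z) \<partial>P)))) \<and>
      cgf P (\<lambda>z. loss (fst z) (snd z)) t \<le> \<psi>p t"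
    and cgf_m: "\<And>t. - t \<in> dom_b bm \<Longrightarrow>
      integrable P (\<lambda>z. exp (t * (loss (fst z) (snd z) - (\<integral>z. loss (fst z) (snd z) \<partial>P)))) \<and>
      cgf P (\<lambda>z. loss (fst z) (snd z)) t \<le> \<psi>m (- t)"
  shows "ereal ((\<integral>x. loss (X x) (Y x) \<partial>J) - (\<integral>z. loss (fst z) (snd z) \<partial>P))
      \<le> legendre_dual_inv \<psi>p bp (mutual_info J S T X Y)"
    and "ereal ((\<integral>z. loss (fst z) (snd z) \<partial>P) - (\<integral>x. loss (X x) (Y x) \<partial>J))
      \<le> legendre_dual_inv \<psi>m bm (mutual_info J S T X Y)"
proof -
  show "ereal ((\<integral>x. loss (X x) (Y x) \<partial>J) - (\<integral>z. loss (fst z) (snd z) \<partial>P))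
      \<le> legendre_dual_inv \<psi>p bp (mutual_info J S T X Y)"
    using mutual_info_decoupling[OF assms(1-3), of "\<lambda>z. loss (fst z) (snd z)"] loss_J loss_P cgf_p
    unfolding P_def by simp
  have minus_cgf_le:
    "integrable P (\<lambda>z. exp (t * (- loss (fst z) (snd z) - (\<integral>z. - loss (fst z) (snd z) \<partial>P))))
      \<and> cgf P (\<lambda>z. - loss (fst z) (snd z)) t \<le> \<psi>m t" if "t \<in> dom_b bm" for t
  proof -
    have "(\<lambda>z. exp (t * (- loss (fst z) (snd z) - (\<integral>z. - loss (fst z) (snd z) \<partial>P))))
      = (\<lambda>z. exp (- t * (loss (fst z) (snd z) - (\<integral>z. loss (fst z) (snd z) \<partial>P))))"
      by (simp add: algebra_simps)
    then show ?thesis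
      using cgf_m[of "- t"] that by (simp add: cgf_uminus)
  qed
  have "ereal ((\<integral>x. - loss (X x) (Y x) \<partial>J) - (\<integral>z. - loss (fst z) (snd z) \<partial>P))
      \<le> legendre_dual_inv \<psi>m bm (mutual_info J S T X Y)"
    using mutual_info_decoupling[OF assms(1-3), of "\<lambda>z. - loss (fst z) (snd z)" bm \<psi>m]
      loss_J loss_P minus_cgf_le
    unfolding P_def by simp
  then show "ereal ((\<integral>z. loss (fst z) (snd z) \<partial>P) - (\<integral>x. loss (X x) (Y x) \<partial>J))
      \<le> legendre_dual_inv \<psi>m bm (mutual_info J S T X Y)"
    by simp
qed

section \<open>The distributed learning model\<close>

lemma mem_sample_index [simp]: "(k, i) \<in> sample_index K n \<longleftrightarrow> k < K \<and> i < n k"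
  by (simp add: sample_index_def)

lemma dist_risk_diff_eq_sum:
  assumes "\<And>k. k < K \<Longrightarrow> 1 \<le> n k"
  shows "dist_pop_risk loss K n \<pi> w - dist_emp_risk loss K n d w =
    (\<Sum>k<K. \<Sum>i<n k. (1 / real (\<Sum>j<K. n j)) * (pop_risk loss (\<pi> k) w - loss (d (k, i)) w))"
proof -
  let ?c = "1 / real (\<Sum>j<K. n j)"
  have "(\<Sum>i<n k. ?c * (pop_risk loss (\<pi> k) w - loss (d (k, i)) w))
    = real (n k) / real (\<Sum>j<K. n j) * pop_risk loss (\<pi> k) w
      - real (n k) / real (\<Sum>j<K. n j) * emp_risk loss n d k w" if "k < K" for k
    using assms[OF that]
    by (simp add: emp_risk_def sum_subtractf sum_divide_distrib[symmetric] diff_divide_distrib)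
  then show ?thesis
    unfolding dist_pop_risk_def dist_emp_risk_def by (simp add: sum_subtractf)
qed

lemma scaled_double_sum_bounds:
  fixes D :: "nat \<Rightarrow> nat \<Rightarrow> real" and U V :: "nat \<Rightarrow> nat \<Rightarrow> ereal"
  assumes "0 \<le> c"
    and lower: "\<And>k i. k < K \<Longrightarrow> i < n k \<Longrightarrow> ereal (- D k i) \<le> U k i"
    and upper: "\<And>k i. k < K \<Longrightarrow> i < n k \<Longrightarrow> ereal (D k i) \<le> V k i"
  shows "- (ereal c * (\<Sum>k<K. \<Sum>i<n k. U k i)) \<le> ereal (c * (\<Sum>k<K. \<Sum>i<n k. D k i))
       \<and> ereal (c * (\<Sum>k<K. \<Sum>i<n k. D k i)) \<le> ereal c * (\<Sum>k<K. \<Sum>i<n k. V k i)"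
proof
  have "ereal c * (\<Sum>k<K. \<Sum>i<n k. ereal (- D k i)) \<le> ereal c * (\<Sum>k<K. \<Sum>i<n k. U k i)"
    using assms by (intro ereal_mult_left_mono sum_mono) auto
  then show "- (ereal c * (\<Sum>k<K. \<Sum>i<n k. U k i)) \<le> ereal (c * (\<Sum>k<K. \<Sum>i<n k. D k i))"
    by (simp add: sum_negf ereal_uminus_le_reorder)
  have "ereal c * (\<Sum>k<K. \<Sum>i<n k. ereal (D k i)) \<le> ereal c * (\<Sum>k<K. \<Sum>i<n k. V k i)"
    using assms by (intro ereal_mult_left_mono sum_mono) auto
  then show "ereal (c * (\<Sum>k<K. \<Sum>i<n k. D k i)) \<le> ereal c * (\<Sum>k<K. \<Sum>i<n k. V k i)"
    by simp
qed

locale distributed_learning =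
  fixes Ms :: "'s measure" and Mw :: "'w measure"
    and K :: nat and n :: "nat \<Rightarrow> nat"
    and \<pi> :: "nat \<Rightarrow> 's measure"
    and \<kappa> :: "nat \<Rightarrow> (nat \<Rightarrow> 's) \<Rightarrow> 'w measure"
    and \<phi> :: "(nat \<Rightarrow> 'w) \<Rightarrow> 'w measure"
  assumes pi_prob: "\<And>k. k < K \<Longrightarrow> prob_space (\<pi> k)"
    and pi_sets: "\<And>k. k < K \<Longrightarrow> sets (\<pi> k) = sets Ms"
    and user_kernel: "\<And>k. k < K \<Longrightarrow> \<kappa> k \<in> PiM {..<n k} (\<lambda>_. Ms) \<rightarrow>\<^sub>M prob_algebra Mw"
    and fusion_kernel: "\<phi> \<in> PiM {..<K} (\<lambda>_. Mw) \<rightarrow>\<^sub>M prob_algebra Mw"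
begin

abbreviation "data_space \<equiv> PiM (sample_index K n) (\<lambda>_. Ms)"

abbreviation "joint \<equiv> joint_law Ms Mw K n \<pi> \<kappa> \<phi>"

lemma sets_data_law: "sets (data_law K n \<pi>) = sets data_space"
  unfolding data_law_def by (rule sets_PiM_cong) (auto simp: sample_index_def pi_sets)

lemma prob_space_data_law: "prob_space (data_law K n \<pi>)"
  unfolding data_law_def by (rule prob_space_PiM) (auto simp: sample_index_def pi_prob)

lemma measurable_user_kernel_data:
  "k < K \<Longrightarrow> (\<lambda>d. \<kappa> k (user_data n d k)) \<in> data_space \<rightarrow>\<^sub>M prob_algebra Mw"
  unfolding user_data_def
  by (rule measurable_comp[OF _ user_kernel, unfolded comp_def])
    (intro measurable_restrict measurable_component_singleton; simp)

lemma user_kernel_data: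
  assumes "k < K" "d \<in> space data_space"
  shows "prob_space (\<kappa> k (user_data n d k))" "sets (\<kappa> k (user_data n d k)) = sets Mw"
  using measurable_space[OF measurable_user_kernel_data[OF assms(1)] assms(2)]
  by (auto simp: space_prob_algebra)

lemma emeasure_users_law_prod_emb:
  assumes d: "d \<in> space data_space" and "finite J" "J \<subseteq> {..<K}" and E: "\<And>j. j \<in> J \<Longrightarrow> E j \<in> sets Mw"
  shows "emeasure (users_law K n \<kappa> d) (prod_emb {..<K} (\<lambda>_. Mw) J (\<Pi>\<^sub>E j\<in>J. E j))
    = (\<Prod>j\<in>J. emeasure (\<kappa> j (user_data n d j)) (E j))"
proof -
  have "space (\<kappa> k (user_data n d k)) = space Mw" if "k < K" for k
    using sets_eq_imp_space_eq[OF user_kernel_data(2)[OF that d]] .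
  then have "prod_emb {..<K} (\<lambda>_. Mw) J (\<Pi>\<^sub>E j\<in>J. E j)
      = prod_emb {..<K} (\<lambda>k. \<kappa> k (user_data n d k)) J (\<Pi>\<^sub>E j\<in>J. E j)"
    unfolding prod_emb_def by (auto simp: PiE_iff)
  then show ?thesis
    unfolding users_law_def using assms(2-4) user_kernel_data[OF _ d]
    by (simp only:) (rule emeasure_PiM_emb, auto)
qed

lemma measurable_users_law:
  "(\<lambda>d. users_law K n \<kappa> d) \<in> data_space \<rightarrow>\<^sub>M prob_algebra (PiM {..<K} (\<lambda>_. Mw))"
proof (rule measurable_prob_algebra_generated[OF sets_PiM Int_stable_prod_algebra
      prod_algebra_sets_into_space])
  fix d assume d: "d \<in> space data_space"
  show "prob_space (users_law K n \<kappa> d)"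
    unfolding users_law_def by (rule prob_space_PiM) (use user_kernel_data[OF _ d] in auto)
  show "sets (users_law K n \<kappa> d) = sets (PiM {..<K} (\<lambda>_. Mw))"
    unfolding users_law_def by (rule sets_PiM_cong) (use user_kernel_data[OF _ d] in auto)
next
  fix A assume "A \<in> prod_algebra {..<K} (\<lambda>_. Mw)"
  then obtain J E where A: "A = prod_emb {..<K} (\<lambda>_. Mw) J (\<Pi>\<^sub>E j\<in>J. E j)"
    and J: "finite J" "J \<subseteq> {..<K}" and E: "\<And>j. j \<in> J \<Longrightarrow> E j \<in> sets Mw"
    by (rule prod_algebraE) auto
  show "(\<lambda>d. emeasure (users_law K n \<kappa> d) A) \<in> borel_measurable data_space"
  proof (rule measurable_cong[THEN iffD2])
    show "emeasure (users_law K n \<kappa> d) A = (\<Prod>j\<in>J. emeasure (\<kappa> j (user_data n d j)) (E j))"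
      if "d \<in> space data_space" for d
      unfolding A by (rule emeasure_users_law_prod_emb[OF that J E])
    show "(\<lambda>d. \<Prod>j\<in>J. emeasure (\<kappa> j (user_data n d j)) (E j)) \<in> borel_measurable data_space"
    proof (rule borel_measurable_prod_ennreal)
      fix j assume j: "j \<in> J"
      with J have "j < K" by auto
      show "(\<lambda>d. emeasure (\<kappa> j (user_data n d j)) (E j)) \<in> borel_measurable data_space"
        using measurable_comp[OF measurable_prob_algebraD[OF measurable_user_kernel_data[OF \<open>j < K\<close>]]
            measurable_emeasure_subprob_algebra[OF E[OF j]]]
        by (simp add: comp_def)
    qed
  qed
qed

definition data_output_kernel :: "(nat \<times> nat \<Rightarrow> 's) \<Rightarrow> ((nat \<times> nat \<Rightarrow> 's) \<times> 'w) measure" where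
  "data_output_kernel d = distr (bind (users_law K n \<kappa> d) \<phi>) (data_space \<Otimes>\<^sub>M Mw) (\<lambda>w. (d, w))"

lemma joint_law_eq_bind: "joint = bind (data_law K n \<pi>) data_output_kernel"
  unfolding joint_law_def data_output_kernel_def ..

lemma measurable_fused_output: "(\<lambda>d. bind (users_law K n \<kappa> d) \<phi>) \<in> data_space \<rightarrow>\<^sub>M prob_algebra Mw"
  by (rule measurable_bind_prob_space[OF measurable_users_law fusion_kernel])

lemma measurable_data_output_kernel:
  "data_output_kernel \<in> data_space \<rightarrow>\<^sub>M prob_algebra (data_space \<Otimes>\<^sub>M Mw)"
  unfolding data_output_kernel_def[abs_def]
  by (rule measurable_distr_prob_space2[OF measurable_fused_output]) simp

lemma data_law_in_prob_algebra: "data_law K n \<pi> \<in> space (prob_algebra data_space)"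
  using prob_space_data_law sets_data_law by (simp add: space_prob_algebra)

lemma prob_space_joint: "prob_space joint"
  unfolding joint_law_eq_bind
  by (rule prob_space_bind'[OF data_law_in_prob_algebra measurable_data_output_kernel])

lemma sets_joint: "sets joint = sets (data_space \<Otimes>\<^sub>M Mw)"
  unfolding joint_law_eq_bind
  by (rule sets_bind'[OF data_law_in_prob_algebra measurable_data_output_kernel])

lemma distr_data_output_kernel_fst:
  assumes d: "d \<in> space data_space"
  shows "distr (data_output_kernel d) data_space fst = return data_space d"
proof -
  have "prob_space (bind (users_law K n \<kappa> d) \<phi>)" "sets (bind (users_law K n \<kappa> d) \<phi>) = sets Mw"
    using measurable_space[OF measurable_fused_output d] by (simp_all add: space_prob_algebra)
  moreover from this(2) have "(\<lambda>w. (d, w)) \<in> bind (users_law K n \<kappa> d) \<phi> \<rightarrow>\<^sub>M data_space \<Otimes>\<^sub>M Mw"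
    by (intro measurable_Pair measurable_const d measurable_ident_sets)
  ultimately show ?thesis
    unfolding data_output_kernel_def using d
    by (simp add: distr_distr comp_def prob_space.distr_const)
qed

lemma distr_joint_fst: "distr joint data_space fst = data_law K n \<pi>"
proof -
  have "distr joint data_space fst
      = bind (data_law K n \<pi>) (\<lambda>d. distr (data_output_kernel d) data_space fst)"
    unfolding joint_law_eq_bind
    using measurable_data_output_kernel prob_space.not_empty[OF prob_space_data_law]
    by (intro distr_bind[OF measurable_prob_algebraD])
      (auto simp: measurable_cong_sets[OF sets_data_law refl])
  also have "\<dots> = bind (data_law K n \<pi>) (return data_space)"
    using sets_eq_imp_space_eq[OF sets_data_law]
    by (intro bind_cong refl) (simp add: distr_data_output_kernel_fst)
  also have "\<dots> = data_law K n \<pi>"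
    by (rule bind_return''[OF sets_data_law])
  finally show ?thesis .
qed

lemma measurable_snd_joint [measurable]: "snd \<in> joint \<rightarrow>\<^sub>M Mw"
  by (simp add: measurable_cong_sets[OF sets_joint refl])

lemma measurable_sample:
  assumes "k < K" "i < n k"
  shows "(\<lambda>dw. fst dw (k, i)) \<in> joint \<rightarrow>\<^sub>M Ms"
  using assms unfolding measurable_cong_sets[OF sets_joint refl]
  by (intro measurable_comp[OF measurable_fst, unfolded comp_def] measurable_component_singleton) simp

lemma distr_joint_sample:
  assumes "k < K" "i < n k"
  shows "distr joint Ms (\<lambda>dw. fst dw (k, i)) = \<pi> k"
proof -
  have "distr joint Ms (\<lambda>dw. fst dw (k, i)) = distr (distr joint data_space fst) Ms (\<lambda>d. d (k, i))"
    using assms by (subst distr_distr) (auto simp: comp_def measurable_cong_sets[OF sets_joint refl])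
  also have "\<dots> = distr (data_law K n \<pi>) (\<pi> (fst (k, i))) (\<lambda>d. d (k, i))"
    unfolding distr_joint_fst using assms by (intro distr_cong) (auto simp: pi_sets)
  also have "\<dots> = \<pi> (fst (k, i))"
    unfolding data_law_def using assms
    by (intro distr_PiM_component) (auto simp: sample_index_def pi_prob)
  finally show ?thesis by simp
qed

end

locale distributed_learning_loss = distributed_learning Ms Mw K n \<pi> \<kappa> \<phi>
  for Ms :: "'s measure" and Mw :: "'w measure" and K n \<pi> \<kappa> \<phi> +
  fixes loss :: "'s \<Rightarrow> 'w \<Rightarrow> real"
  assumes loss_measurable: "(\<lambda>sw. loss (fst sw) (snd sw)) \<in> borel_measurable (Ms \<Otimes>\<^sub>M Mw)"
    and loss_nonneg: "\<And>s w. s \<in> space Ms \<Longrightarrow> w \<in> space Mw \<Longrightarrow> 0 \<le> loss s w"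
    and loss_integrable: "\<And>k. k < K \<Longrightarrow>
      integrable (\<pi> k \<Otimes>\<^sub>M distr (joint_law Ms Mw K n \<pi> \<kappa> \<phi>) Mw snd) (\<lambda>sw. loss (fst sw) (snd sw))"
begin

abbreviation "output_law \<equiv> distr joint Mw snd"

abbreviation "sample_loss k i \<equiv> \<lambda>dw. loss (fst dw (k, i)) (snd dw)"

abbreviation "decoupled_risk k \<equiv> \<integral>sw. loss (fst sw) (snd sw) \<partial>(\<pi> k \<Otimes>\<^sub>M output_law)"

abbreviation "sample_count \<equiv> real (\<Sum>k<K. n k)"

definition gen_gap :: "(nat \<times> nat \<Rightarrow> 's) \<times> 'w \<Rightarrow> real" where
  "gen_gap dw = (\<Sum>k<K. \<Sum>i<n k. (1 / sample_count) * (pop_risk loss (\<pi> k) (snd dw) - sample_loss k i dw))"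

lemma gen_error_eq_integral_gen_gap:
  assumes "\<And>k. k < K \<Longrightarrow> 1 \<le> n k"
  shows "gen_error Ms Mw loss K n \<pi> \<kappa> \<phi> = (\<integral>dw. gen_gap dw \<partial>joint)"
  unfolding gen_error_def gen_gap_def
  by (intro Bochner_Integration.integral_cong refl dist_risk_diff_eq_sum assms)

lemma measurable_sample_loss:
  assumes "k < K" "i < n k"
  shows "sample_loss k i \<in> borel_measurable joint"
  using measurable_comp[OF measurable_Pair[OF measurable_sample[OF assms] measurable_snd_joint]
      loss_measurable]
  by (simp add: comp_def)

lemma sample_loss_nonneg:
  assumes "k < K" "i < n k" "dw \<in> space joint"
  shows "0 \<le> sample_loss k i dw"
  using loss_nonneg measurable_space[OF measurable_sample[OF assms(1,2)] assms(3)]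
    measurable_space[OF measurable_snd_joint assms(3)] by blast

lemma integrable_pop_risk_output:
  assumes "k < K"
  shows "integrable joint (\<lambda>dw. pop_risk loss (\<pi> k) (snd dw))"
    and "(\<integral>dw. pop_risk loss (\<pi> k) (snd dw) \<partial>joint) = decoupled_risk k"
proof -
  interpret output_law: prob_space output_law
    by (rule prob_space.prob_space_distr[OF prob_space_joint]) simp
  interpret \<pi>: prob_space "\<pi> k" by (rule pi_prob[OF assms])
  interpret pair_sigma_finite "\<pi> k" output_law ..
  have loss_int: "integrable (\<pi> k \<Otimes>\<^sub>M output_law) (case_prod loss)"
    using loss_integrable[OF assms] by (simp add: case_prod_beta')
  then have "integrable output_law (pop_risk loss (\<pi> k))"
    "(\<integral>w. pop_risk loss (\<pi> k) w \<partial>output_law) = decoupled_risk k"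
    using integrable_snd[OF loss_int] integral_snd[OF loss_int]
    by (simp_all add: pop_risk_def[abs_def] case_prod_beta')
  moreover have "pop_risk loss (\<pi> k) \<in> borel_measurable Mw"
    using borel_measurable_integrable[OF calculation(1)] by simp
  ultimately show "integrable joint (\<lambda>dw. pop_risk loss (\<pi> k) (snd dw))"
    and "(\<integral>dw. pop_risk loss (\<pi> k) (snd dw) \<partial>joint) = decoupled_risk k"
    by (simp_all add: integrable_distr_eq integral_distr)
qed

text \<open>Each sample loss is nonnegative and dominated by the total loss, which is an affine
  combination of \<^const>\<open>gen_gap\<close> and the integrable population risks.\<close>
lemma integrable_sample_loss:
  assumes gap: "integrable joint gen_gap" and ki: "k < K" "i < n k"
  shows "integrable joint (sample_loss k i)"
proof -
  define total_loss where "total_loss dw = (\<Sum>k<K. \<Sum>i<n k. sample_loss k i dw)" for dw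
  have "n k \<le> (\<Sum>k<K. n k)"
    using ki by (intro member_le_sum) auto
  with ki have "sample_count \<noteq> 0"
    by (metis not_less_zero of_nat_eq_0_iff le_zero_eq)
  then have "total_loss = (\<lambda>dw. sample_count *
      ((\<Sum>k<K. \<Sum>i<n k. (1 / sample_count) * pop_risk loss (\<pi> k) (snd dw)) - gen_gap dw))"
    unfolding total_loss_def gen_gap_def
    by (intro ext) (simp add: sum_subtractf sum_distrib_left right_diff_distrib)
  moreover have "integrable joint (\<lambda>dw. \<Sum>k<K. \<Sum>i<n k. (1 / sample_count) * pop_risk loss (\<pi> k) (snd dw))"
    by (intro Bochner_Integration.integrable_sum integrable_mult_right integrable_pop_risk_output) simp
  ultimately have "integrable joint total_loss"
    using gap by (simp only:) (intro integrable_mult_right Bochner_Integration.integrable_diff)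
  then show ?thesis
  proof (rule Bochner_Integration.integrable_bound[OF _ measurable_sample_loss[OF ki]], intro AE_I2)
    fix dw assume dw: "dw \<in> space joint"
    have "sample_loss k i dw \<le> (\<Sum>i<n k. sample_loss k i dw)"
      using ki dw sample_loss_nonneg by (intro member_le_sum) auto
    also have "\<dots> \<le> total_loss dw"
      unfolding total_loss_def using ki dw sample_loss_nonneg by (intro member_le_sum sum_nonneg) auto
    finally show "norm (sample_loss k i dw) \<le> norm (total_loss dw)"
      using sample_loss_nonneg[OF ki dw] by simp
  qed
qed

lemma integral_gen_gap:
  assumes "\<And>k i. k < K \<Longrightarrow> i < n k \<Longrightarrow> integrable joint (sample_loss k i)"
  shows "(\<integral>dw. gen_gap dw \<partial>joint)
    = (1 / sample_count) * (\<Sum>k<K. \<Sum>i<n k. decoupled_risk k - (\<integral>dw. sample_loss k i dw \<partial>joint))"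
proof -
  have summand:
    "integrable joint (\<lambda>dw. (1 / sample_count) * (pop_risk loss (\<pi> k) (snd dw) - sample_loss k i dw))"
    if "k \<in> {..<K}" "i \<in> {..<n k}" for k i
    using assms that integrable_pop_risk_output by auto
  have "(\<integral>dw. gen_gap dw \<partial>joint) = (\<Sum>k<K. \<Sum>i<n k.
      \<integral>dw. (1 / sample_count) * (pop_risk loss (\<pi> k) (snd dw) - sample_loss k i dw) \<partial>joint)"
    unfolding gen_gap_def
  proof (rule trans[OF Bochner_Integration.integral_sum sum.cong[OF refl]])
    fix k assume k: "k \<in> {..<K}"
    show "integrable joint
        (\<lambda>dw. \<Sum>i<n k. (1 / sample_count) * (pop_risk loss (\<pi> k) (snd dw) - sample_loss k i dw))"
      using summand[OF k] by (intro Bochner_Integration.integrable_sum)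
    show "(\<integral>dw. (\<Sum>i<n k. (1 / sample_count) * (pop_risk loss (\<pi> k) (snd dw) - sample_loss k i dw))
        \<partial>joint)
      = (\<Sum>i<n k. \<integral>dw. (1 / sample_count) * (pop_risk loss (\<pi> k) (snd dw) - sample_loss k i dw) \<partial>joint)"
      using summand[OF k] by (intro Bochner_Integration.integral_sum)
  qed
  also have "\<dots> = (\<Sum>k<K. \<Sum>i<n k.
      (1 / sample_count) * (decoupled_risk k - (\<integral>dw. sample_loss k i dw \<partial>joint)))"
    using assms integrable_pop_risk_output by (intro sum.cong refl) simp
  finally show ?thesis
    by (simp add: sum_distrib_left)
qed

text \<open>If \<^const>\<open>gen_gap\<close> is not integrable, its Bochner integral and hence the generalization
  error is 0.\<close>
lemma gen_error_cases:
  assumes "\<And>k. k < K \<Longrightarrow> 1 \<le> n k"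
  obtains "gen_error Ms Mw loss K n \<pi> \<kappa> \<phi> = 0"
  | "\<And>k i. k < K \<Longrightarrow> i < n k \<Longrightarrow> integrable joint (sample_loss k i)"
    "gen_error Ms Mw loss K n \<pi> \<kappa> \<phi>
      = (1 / sample_count) * (\<Sum>k<K. \<Sum>i<n k. decoupled_risk k - (\<integral>dw. sample_loss k i dw \<partial>joint))"
proof (cases "integrable joint gen_gap")
  case False
  then show ?thesis
    by (intro that(1)) (simp add: gen_error_eq_integral_gen_gap[OF assms] not_integrable_integral_eq)
next
  case True
  then have "\<And>k i. k < K \<Longrightarrow> i < n k \<Longrightarrow> integrable joint (sample_loss k i)"
    by (rule integrable_sample_loss)
  then show ?thesis
    by (intro that(2)) (simp_all add: gen_error_eq_integral_gen_gap[OF assms] integral_gen_gap)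
qed


lemma sample_gap_bounds:
  fixes \<psi>p \<psi>m :: "nat \<Rightarrow> real \<Rightarrow> real" and bp bm :: "nat \<Rightarrow> ereal"
  assumes ki: "k < K" "i < n k"
    and cgf_p: "\<And>k t. k < K \<Longrightarrow> t \<in> dom_b (bp k) \<Longrightarrow>
      integrable (\<pi> k \<Otimes>\<^sub>M output_law) (\<lambda>sw. exp (t * (loss (fst sw) (snd sw) - decoupled_risk k))) \<and>
      cgf (\<pi> k \<Otimes>\<^sub>M output_law) (\<lambda>sw. loss (fst sw) (snd sw)) t \<le> \<psi>p k t"
    and cgf_m: "\<And>k t. k < K \<Longrightarrow> - t \<in> dom_b (bm k) \<Longrightarrow>
      integrable (\<pi> k \<Otimes>\<^sub>M output_law) (\<lambda>sw. exp (t * (loss (fst sw) (snd sw) - decoupled_risk k))) \<and>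
      cgf (\<pi> k \<Otimes>\<^sub>M output_law) (\<lambda>sw. loss (fst sw) (snd sw)) t \<le> \<psi>m k (- t)"
  defines "I \<equiv> mutual_info joint Ms Mw (\<lambda>dw. fst dw (k, i)) snd"
  shows "0 \<le> legendre_dual_inv (\<psi>p k) (bp k) I \<and> 0 \<le> legendre_dual_inv (\<psi>m k) (bm k) I"
    and "integrable joint (sample_loss k i) \<Longrightarrow>
      ereal ((\<integral>dw. sample_loss k i dw \<partial>joint) - decoupled_risk k) \<le> legendre_dual_inv (\<psi>p k) (bp k) I \<and>
      ereal (decoupled_risk k - (\<integral>dw. sample_loss k i dw \<partial>joint)) \<le> legendre_dual_inv (\<psi>m k) (bm k) I"
proof -
  note sample_and_output = prob_space_joint measurable_sample[OF ki] measurable_snd_joint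
  have decoupled: "distr joint Ms (\<lambda>dw. fst dw (k, i)) \<Otimes>\<^sub>M output_law = \<pi> k \<Otimes>\<^sub>M output_law"
    by (simp add: distr_joint_sample[OF ki])
  have prob_decoupled: "prob_space (\<pi> k \<Otimes>\<^sub>M output_law)"
    using prob_space_joint_and_product_distr(1)[OF sample_and_output] by (simp only: decoupled)
  note loss_int = loss_integrable[OF ki(1)]
  have "0 \<le> \<psi>p k t" if "t \<in> dom_b (bp k)" for t
    using cgf_le_imp_nonneg[OF prob_decoupled loss_int] cgf_p[OF ki(1) that] by blast
  moreover have "0 \<le> \<psi>m k t" if "t \<in> dom_b (bm k)" for t
    using cgf_le_imp_nonneg[OF prob_decoupled loss_int] cgf_m[OF ki(1), of "- t"] that by fastforce
  ultimately show "0 \<le> legendre_dual_inv (\<psi>p k) (bp k) I \<and> 0 \<le> legendre_dual_inv (\<psi>m k) (bm k) I"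
    unfolding I_def using mutual_info_nonneg[OF sample_and_output]
    by (blast intro: legendre_dual_inv_nonneg)
  assume "integrable joint (sample_loss k i)"
  from mutual_info_loss_gap_bounds[OF sample_and_output, of loss, unfolded decoupled,
      OF this loss_int cgf_p[OF ki(1)] cgf_m[OF ki(1)]]
  show "ereal ((\<integral>dw. sample_loss k i dw \<partial>joint) - decoupled_risk k) \<le> legendre_dual_inv (\<psi>p k) (bp k) I \<and>
      ereal (decoupled_risk k - (\<integral>dw. sample_loss k i dw \<partial>joint)) \<le> legendre_dual_inv (\<psi>m k) (bm k) I"
    unfolding I_def by blast
qed

lemma gen_error_bounds:
  fixes U V :: "nat \<Rightarrow> nat \<Rightarrow> ereal"
  assumes n_pos: "\<And>k. k < K \<Longrightarrow> 1 \<le> n k"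
    and nonneg: "\<And>k i. k < K \<Longrightarrow> i < n k \<Longrightarrow> 0 \<le> U k i \<and> 0 \<le> V k i"
    and gap: "\<And>k i. k < K \<Longrightarrow> i < n k \<Longrightarrow> integrable joint (sample_loss k i) \<Longrightarrow>
      ereal ((\<integral>dw. sample_loss k i dw \<partial>joint) - decoupled_risk k) \<le> U k i \<and>
      ereal (decoupled_risk k - (\<integral>dw. sample_loss k i dw \<partial>joint)) \<le> V k i"
  shows "- (ereal (1 / sample_count) * (\<Sum>k<K. \<Sum>i<n k. U k i)) \<le> ereal (gen_error Ms Mw loss K n \<pi> \<kappa> \<phi>)
    \<and> ereal (gen_error Ms Mw loss K n \<pi> \<kappa> \<phi>) \<le> ereal (1 / sample_count) * (\<Sum>k<K. \<Sum>i<n k. V k i)"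
proof (rule gen_error_cases[OF n_pos])
  assume "gen_error Ms Mw loss K n \<pi> \<kappa> \<phi> = 0"
  then show ?thesis
    using scaled_double_sum_bounds[of "1 / sample_count" K n "\<lambda>_ _. 0" U V] nonneg
    by (simp add: sum_nonneg zero_ereal_def[symmetric])
next
  assume "\<And>k i. k < K \<Longrightarrow> i < n k \<Longrightarrow> integrable joint (sample_loss k i)"
    and "gen_error Ms Mw loss K n \<pi> \<kappa> \<phi>
      = (1 / sample_count) * (\<Sum>k<K. \<Sum>i<n k. decoupled_risk k - (\<integral>dw. sample_loss k i dw \<partial>joint))"
  then show ?thesis
    using scaled_double_sum_bounds[of "1 / sample_count" K n
        "\<lambda>k i. decoupled_risk k - (\<integral>dw. sample_loss k i dw \<partial>joint)" U V] gap
    by (simp add: sum_nonneg)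
qed

end

theorem theorem2:
  fixes Ms :: "'s measure" and Mw :: "'w measure"
    and loss :: "'s \<Rightarrow> 'w \<Rightarrow> real"
    and K :: nat and n :: "nat \<Rightarrow> nat"
    and \<pi> :: "nat \<Rightarrow> 's measure"
    and \<kappa> :: "nat \<Rightarrow> (nat \<Rightarrow> 's) \<Rightarrow> 'w measure"
    and \<phi> :: "(nat \<Rightarrow> 'w) \<Rightarrow> 'w measure"
    and \<psi>p \<psi>m :: "nat \<Rightarrow> real \<Rightarrow> real" and bp bm :: "nat \<Rightarrow> ereal"
  defines "J \<equiv> joint_law Ms Mw K n \<pi> \<kappa> \<phi>"
  defines "PW \<equiv> distr J Mw snd"
  assumes K_pos: "1 \<le> K"
    and n_pos: "\<And>k. k < K \<Longrightarrow> 1 \<le> n k"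
    and loss_meas: "(\<lambda>sw. loss (fst sw) (snd sw)) \<in> borel_measurable (Ms \<Otimes>\<^sub>M Mw)"
    and loss_nonneg: "\<And>s w. s \<in> space Ms \<Longrightarrow> w \<in> space Mw \<Longrightarrow> 0 \<le> loss s w"
    and pi_prob: "\<And>k. k < K \<Longrightarrow> prob_space (\<pi> k)"
    and pi_sets: "\<And>k. k < K \<Longrightarrow> sets (\<pi> k) = sets Ms"
    and user_kernel: "\<And>k. k < K \<Longrightarrow> \<kappa> k \<in> measurable (PiM {..<n k} (\<lambda>_. Ms)) (prob_algebra Mw)"
    and fusion_kernel: "\<phi> \<in> measurable (PiM {..<K} (\<lambda>_. Mw)) (prob_algebra Mw)"
    and loss_int: "\<And>k. k < K \<Longrightarrow> integrable (\<pi> k \<Otimes>\<^sub>M PW) (\<lambda>sw. loss (fst sw) (snd sw))"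
    and psi_p: "\<And>k. k < K \<Longrightarrow> admissible_psi (\<psi>p k) (bp k)"
    and psi_m: "\<And>k. k < K \<Longrightarrow> admissible_psi (\<psi>m k) (bm k)"
    and cgf_p: "\<And>k t. k < K \<Longrightarrow> t \<in> dom_b (bp k) \<Longrightarrow>
        integrable (\<pi> k \<Otimes>\<^sub>M PW)
          (\<lambda>sw. exp (t * (loss (fst sw) (snd sw) - (\<integral>y. loss (fst y) (snd y) \<partial>(\<pi> k \<Otimes>\<^sub>M PW))))) \<and>
        cgf (\<pi> k \<Otimes>\<^sub>M PW) (\<lambda>sw. loss (fst sw) (snd sw)) t \<le> \<psi>p k t"
    and cgf_m: "\<And>k t. k < K \<Longrightarrow> - t \<in> dom_b (bm k) \<Longrightarrow>
        integrable (\<pi> k \<Otimes>\<^sub>M PW)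
          (\<lambda>sw. exp (t * (loss (fst sw) (snd sw) - (\<integral>y. loss (fst y) (snd y) \<partial>(\<pi> k \<Otimes>\<^sub>M PW))))) \<and>
        cgf (\<pi> k \<Otimes>\<^sub>M PW) (\<lambda>sw. loss (fst sw) (snd sw)) t \<le> \<psi>m k (- t)"
  shows "- (ereal (1 / real (\<Sum>k<K. n k)) *
            (\<Sum>k<K. \<Sum>i<n k. legendre_dual_inv (\<psi>p k) (bp k)
               (mutual_info J Ms Mw (\<lambda>dw. fst dw (k, i)) snd)))
           \<le> ereal (gen_error Ms Mw loss K n \<pi> \<kappa> \<phi>)
       \<and> ereal (gen_error Ms Mw loss K n \<pi> \<kappa> \<phi>)
           \<le> ereal (1 / real (\<Sum>k<K. n k)) *
            (\<Sum>k<K. \<Sum>i<n k. legendre_dual_inv (\<psi>m k) (bm k)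
               (mutual_info J Ms Mw (\<lambda>dw. fst dw (k, i)) snd))"
proof -
  interpret distributed_learning_loss Ms Mw K n \<pi> \<kappa> \<phi> loss
    using pi_prob pi_sets user_kernel fusion_kernel loss_meas loss_nonneg loss_int
    unfolding PW_def J_def
    by (simp add: distributed_learning_loss_def distributed_learning_def
        distributed_learning_loss_axioms_def)
  show ?thesis
    unfolding J_def
    by (rule gen_error_bounds[OF n_pos
          sample_gap_bounds[OF _ _ cgf_p[unfolded PW_def J_def] cgf_m[unfolded PW_def J_def]]])
qed

end
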